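(* Let $R$ be a commutative multiplicative hyperring with identity, let $\alpha$ be a good endomorphism of $R$, and let $I$ be a hyperideal of $R$. Then the following are equivalent: - $I$ is $\alpha$-prime; - for all hyperideals $I_1,I_2$ of $R$, $I_1\circ I_2\subseteq I$ implies $I_1\subseteq I$ or $\alpha(I_2)\subseteq I$.
   Context: A multiplicative hyperring is an abelian group $(R,+)$ with a hyperoperation $\circ:R\times R\to \mathcal P^*(R)$ (nonempty subsets) such that $a\circ(b\circ c)=(a\circ b)\circ c$, $a\circ(b+c)\subseteq a\circ b+a\circ c$, $(b+c)\circ a\subseteq b\circ a+c\circ a$, and $a\circ(-b)=(-a)\circ b=-(a\circ b)$. Products of subsets are unions of elementwise products; in particular $I_1\circ I_2=\bigcup_{a\in I_1,b\in I_2}a\circ b$. Commutative means $a\circ b=b\circ a$. An identity $1$ satisfies $a\in 1\circ a$ for all $a$. A hyperideal is a nonempty $I\subseteq R$ closed under subtraction with $r\circ x\subseteq I$ for $r\in R$, $x\in I$. Standing assumption: every hyperideal is a $\mathbf C$-hyperideal, i.e. for every finite product $A=r_1\circ\cdots\circ r_n$, $A\cap I\ne\emptyset$ implies $A\subseteq I$. A good endomorphism $\alpha$ satisfies $\alpha(x+y)=\alpha(x)+\alpha(y)$ and $\alpha(x\circ y)=\alpha(x)\circ\alpha(y)$; it is applied to sets elementwise. A hyperideal $I$ is $\alpha$-prime if for all $x,y$, $x\circ y\subseteq I$ implies $x\in I$ or $\alpha(y)\in I$. *)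

theory Defs
  imports Main
begin

definition set_hop :: "('a \<Rightarrow> 'a \<Rightarrow> 'a set) \<Rightarrow> 'a set \<Rightarrow> 'a set \<Rightarrow> 'a set" where
  "set_hop m A B = (\<Union>a\<in>A. \<Union>b\<in>B. m a b)"

definition set_plus :: "'a::ab_group_add set \<Rightarrow> 'a set \<Rightarrow> 'a set" where
  "set_plus A B = {x + y | x y. x \<in> A \<and> y \<in> B}"

definition mult_hyperring :: "('a::ab_group_add \<Rightarrow> 'a \<Rightarrow> 'a set) \<Rightarrow> bool" where
  "mult_hyperring m \<longleftrightarrow>
     (\<forall>a b. m a b \<noteq> {}) \<and>
     (\<forall>a b c. set_hop m {a} (m b c) = set_hop m (m a b) {c}) \<and>
     (\<forall>a b c. m a (b + c) \<subseteq> set_plus (m a b) (m a c)) \<and>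
     (\<forall>a b c. m (b + c) a \<subseteq> set_plus (m b a) (m c a)) \<and>
     (\<forall>a b. m a (- b) = uminus ` (m a b) \<and> m (- a) b = uminus ` (m a b))"

definition hcommutative :: "('a \<Rightarrow> 'a \<Rightarrow> 'a set) \<Rightarrow> bool" where
  "hcommutative m \<longleftrightarrow> (\<forall>a b. m a b = m b a)"

definition has_hidentity :: "('a \<Rightarrow> 'a \<Rightarrow> 'a set) \<Rightarrow> 'a \<Rightarrow> bool" where
  "has_hidentity m e \<longleftrightarrow> (\<forall>a. a \<in> m e a)"

definition hyperideal :: "('a::ab_group_add \<Rightarrow> 'a \<Rightarrow> 'a set) \<Rightarrow> 'a set \<Rightarrow> bool" where
  "hyperideal m I \<longleftrightarrow> I \<noteq> {} \<and> (\<forall>x\<in>I. \<forall>y\<in>I. x - y \<in> I) \<and>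
     (\<forall>r x. x \<in> I \<longrightarrow> m r x \<subseteq> I)"

fun hprod :: "('a \<Rightarrow> 'a \<Rightarrow> 'a set) \<Rightarrow> 'a list \<Rightarrow> 'a set" where
  "hprod m [] = {}"
| "hprod m [r] = {r}"
| "hprod m (r # rs) = set_hop m {r} (hprod m rs)"

definition C_hyperideal :: "('a::ab_group_add \<Rightarrow> 'a \<Rightarrow> 'a set) \<Rightarrow> 'a set \<Rightarrow> bool" where
  "C_hyperideal m I \<longleftrightarrow> hyperideal m I \<and>
     (\<forall>rs. rs \<noteq> [] \<longrightarrow> hprod m rs \<inter> I \<noteq> {} \<longrightarrow> hprod m rs \<subseteq> I)"

definition good_endo :: "('a::ab_group_add \<Rightarrow> 'a \<Rightarrow> 'a set) \<Rightarrow> ('a \<Rightarrow> 'a) \<Rightarrow> bool" where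
  "good_endo m \<alpha> \<longleftrightarrow> (\<forall>x y. \<alpha> (x + y) = \<alpha> x + \<alpha> y) \<and>
     (\<forall>x y. \<alpha> ` (m x y) = m (\<alpha> x) (\<alpha> y))"

definition alpha_prime ::
  "('a::ab_group_add \<Rightarrow> 'a \<Rightarrow> 'a set) \<Rightarrow> ('a \<Rightarrow> 'a) \<Rightarrow> 'a set \<Rightarrow> bool" where
  "alpha_prime m \<alpha> I \<longleftrightarrow> hyperideal m I \<and>
     (\<forall>x y. m x y \<subseteq> I \<longrightarrow> x \<in> I \<or> \<alpha> y \<in> I)"

end

theory Submission
  imports Defs
begin

text \<open>For \<open>x \<circ> y \<subseteq> I\<close>, the residual \<open>I\<^sub>2 = (I : x)\<close> contains \<open>y\<close> and
  \<open>I\<^sub>1 = (I : I\<^sub>2)\<close> contains \<open>x\<close>; both are hyperideals and \<open>I\<^sub>1 \<circ> I\<^sub>2 \<subseteq> I\<close>, so the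
  hyperideal condition yields \<open>x \<in> I\<close> or \<open>\<alpha> y \<in> I\<close>.
  Neither direction needs the identity, the \<open>C\<close>-condition or the goodness of \<open>\<alpha>\<close>.\<close>

definition hresidual :: "('a \<Rightarrow> 'a \<Rightarrow> 'a set) \<Rightarrow> 'a set \<Rightarrow> 'a set \<Rightarrow> 'a set" where
  "hresidual m I S = {w. \<forall>z\<in>S. m z w \<subseteq> I}"

lemma set_hop_subset_iff: "set_hop m A B \<subseteq> I \<longleftrightarrow> (\<forall>a\<in>A. \<forall>b\<in>B. m a b \<subseteq> I)"
  unfolding set_hop_def by blast

lemma mult_hyperring_assoc:
  "mult_hyperring m \<Longrightarrow> set_hop m {a} (m b c) = set_hop m (m a b) {c}"
  unfolding mult_hyperring_def by (elim conjE) simp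

lemma mult_hyperring_distrib_right:
  "mult_hyperring m \<Longrightarrow> m a (b + c) \<subseteq> set_plus (m a b) (m a c)"
  unfolding mult_hyperring_def by (elim conjE) simp

lemma mult_hyperring_minus_right:
  "mult_hyperring m \<Longrightarrow> m a (- b) = uminus ` m a b"
  unfolding mult_hyperring_def by (elim conjE) simp

lemma hyperideal_diff: "hyperideal m I \<Longrightarrow> a \<in> I \<Longrightarrow> b \<in> I \<Longrightarrow> a - b \<in> I"
  unfolding hyperideal_def by blast

lemma hyperideal_absorb: "hyperideal m I \<Longrightarrow> x \<in> I \<Longrightarrow> m r x \<subseteq> I"
  unfolding hyperideal_def by blast

lemma hop_diff_subset:
  assumes "mult_hyperring m" and "hyperideal m I"
    and "m a b \<subseteq> I" and "m a c \<subseteq> I"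
  shows "m a (b - c) \<subseteq> I"
proof
  fix v assume "v \<in> m a (b - c)"
  then have "v \<in> set_plus (m a b) (m a (- c))"
    using mult_hyperring_distrib_right[OF assms(1), of a b "- c"] by auto
  then obtain p q where "v = p - q" "p \<in> m a b" "q \<in> m a c"
    unfolding set_plus_def mult_hyperring_minus_right[OF assms(1)] by force
  with assms(2-4) show "v \<in> I" using hyperideal_diff by blast
qed

lemma hyperideal_hresidual:
  assumes MH: "mult_hyperring m" and comm: "hcommutative m" and HI: "hyperideal m I"
    and nonempty: "hresidual m I S \<noteq> {}"
  shows "hyperideal m (hresidual m I S)"
  unfolding hyperideal_def
proof (intro conjI ballI allI impI)
  show "hresidual m I S \<noteq> {}" by (fact nonempty)
next
  fix a b assume "a \<in> hresidual m I S" "b \<in> hresidual m I S"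
  then show "a - b \<in> hresidual m I S"
    using hop_diff_subset[OF MH HI] unfolding hresidual_def by blast
next
  fix r w assume w: "w \<in> hresidual m I S"
  show "m r w \<subseteq> hresidual m I S"
    unfolding hresidual_def
  proof (rule subsetI, rule CollectI, rule ballI)
    fix v z assume v: "v \<in> m r w" and z: "z \<in> S"
    have "m z v \<subseteq> set_hop m {z} (m w r)"
      using v comm unfolding hcommutative_def set_hop_def by blast
    also have "\<dots> = set_hop m (m z w) {r}"
      by (rule mult_hyperring_assoc[OF MH])
    also have "\<dots> \<subseteq> I"
      using w z hyperideal_absorb[OF HI] comm
      unfolding hresidual_def set_hop_def hcommutative_def by blast
    finally show "m z v \<subseteq> I" .
  qed
qed

lemma alpha_prime_hop_hyperideals:
  assumes "alpha_prime m \<alpha> I"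
    and "hyperideal m I1" "hyperideal m I2" "set_hop m I1 I2 \<subseteq> I"
  shows "I1 \<subseteq> I \<or> \<alpha> ` I2 \<subseteq> I"
  using assms unfolding alpha_prime_def set_hop_subset_iff by blast

lemma alpha_primeI_hyperideals:
  assumes MH: "mult_hyperring m" and comm: "hcommutative m" and HI: "hyperideal m I"
    and prime: "\<And>I1 I2. hyperideal m I1 \<Longrightarrow> hyperideal m I2 \<Longrightarrow> set_hop m I1 I2 \<subseteq> I
       \<Longrightarrow> I1 \<subseteq> I \<or> \<alpha> ` I2 \<subseteq> I"
  shows "alpha_prime m \<alpha> I"
  unfolding alpha_prime_def
proof (intro conjI allI impI)
  fix x y assume xy: "m x y \<subseteq> I"
  define I2 where "I2 = hresidual m I {x}"
  define I1 where "I1 = hresidual m I I2"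
  have commute: "m a b = m b a" for a b
    using comm unfolding hcommutative_def by blast
  have "y \<in> I2" using xy unfolding I2_def hresidual_def by simp
  moreover have "x \<in> I1" using commute unfolding I1_def I2_def hresidual_def by simp
  moreover have "set_hop m I1 I2 \<subseteq> I"
    using commute unfolding set_hop_subset_iff I1_def hresidual_def by blast
  moreover have "hyperideal m I1" "hyperideal m I2"
    using \<open>x \<in> I1\<close> \<open>y \<in> I2\<close> hyperideal_hresidual[OF MH comm HI]
    unfolding I1_def I2_def by blast+
  ultimately show "x \<in> I \<or> \<alpha> y \<in> I" using prime by blast
qed (fact HI)

theorem mainTheorem6:
  fixes m :: "'a::ab_group_add \<Rightarrow> 'a \<Rightarrow> 'a set"
    and \<alpha> :: "'a \<Rightarrow> 'a" and e :: 'a and I :: "'a set"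
  assumes "mult_hyperring m"
    and "hcommutative m"
    and "has_hidentity m e"
    and "\<forall>J. hyperideal m J \<longrightarrow> C_hyperideal m J"
    and "good_endo m \<alpha>"
    and "hyperideal m I"
  shows "alpha_prime m \<alpha> I \<longleftrightarrow>
    (\<forall>I1 I2. hyperideal m I1 \<and> hyperideal m I2 \<and> set_hop m I1 I2 \<subseteq> I
       \<longrightarrow> I1 \<subseteq> I \<or> \<alpha> ` I2 \<subseteq> I)"
proof (intro iffI allI impI)
  fix I1 I2
  assume "alpha_prime m \<alpha> I" and "hyperideal m I1 \<and> hyperideal m I2 \<and> set_hop m I1 I2 \<subseteq> I"
  then show "I1 \<subseteq> I \<or> \<alpha> ` I2 \<subseteq> I" using alpha_prime_hop_hyperideals by blast
next
  assume "\<forall>I1 I2. hyperideal m I1 \<and> hyperideal m I2 \<and> set_hop m I1 I2 \<subseteq> I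
       \<longrightarrow> I1 \<subseteq> I \<or> \<alpha> ` I2 \<subseteq> I"
  then show "alpha_prime m \<alpha> I"
    using alpha_primeI_hyperideals[OF assms(1,2,6)] by blast
qed

end
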